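(* Let $X$ be a regular Type I pseudocompact space and $Y$ any space. Then $X$ is countably compact, and $\mathsf{P}(X,Y)\Leftrightarrow\mathsf{P_{cpt}}(X,Y)$ for each $\mathsf{P}\in\{\mathsf{EC},\mathsf{S},\mathsf{L},\mathsf{BR}\}$.
   Context: All spaces are Hausdorff and maps continuous. A space is pseudocompact if every continuous real-valued function on it is bounded (no further separation axiom assumed). A space $X$ is of Type I if $X=\bigcup_{\alpha<\omega_1}X_\alpha$ with $X_\alpha$ open, $\overline{X_\alpha}\subset X_\beta$ for $\alpha<\beta$, $\overline{X_\alpha}$ Lindelöf, and $X\neq X_\alpha$ for all $\alpha$. For a non-Lindelöf space $X$ and a space $Y$, and for every continuous $f:X\to Y$: $\mathsf{EC}(X,Y)$ asks for a Lindelöf $Z\subset X$ with $f(X\setminus Z)$ a singleton; $\mathsf{S}(X,Y)$ asks for a Lindelöf $Z\subset X$ and a retraction $r:X\to Z$ with $f\circ r=f$; $\mathsf{L}(X,Y)$ asks for a Lindelöf $Z$ with $f(Z)=f(X)$; $\mathsf{BR}(X,Y)$ asks for a Lindelöf $Z$ with $f(X\setminus W)=f(X\setminus Z)$ for every Lindelöf $W\supseteq Z$. $\mathsf{P_{cpt}}$ is obtained from $\mathsf{P}$ by replacing every occurrence of "Lindelöf" by "compact" (including for $W$ in $\mathsf{BR}$). *)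

theory Defs
  imports "HOL-Analysis.Analysis"
begin

definition countably_compact_space :: "'a topology \<Rightarrow> bool" where
  "countably_compact_space X \<longleftrightarrow>
     (\<forall>\<U>. countable \<U> \<and> (\<forall>U\<in>\<U>. openin X U) \<and> topspace X \<subseteq> \<Union>\<U>
        \<longrightarrow> (\<exists>\<F>\<subseteq>\<U>. finite \<F> \<and> topspace X \<subseteq> \<Union>\<F>))"

definition pseudocompact_space :: "'a topology \<Rightarrow> bool" where
  "pseudocompact_space X \<longleftrightarrow>
     (\<forall>f. continuous_map X euclideanreal f \<longrightarrow> bounded (f ` topspace X))"

abbreviation omega1 :: "nat set rel" where
  "omega1 \<equiv> cardSuc natLeq"

definition typeI_space :: "'a topology \<Rightarrow> bool" where
  "typeI_space X \<longleftrightarrow>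
     (\<exists>U :: nat set \<Rightarrow> 'a set.
        topspace X = (\<Union>\<alpha>\<in>Field omega1. U \<alpha>) \<and>
        (\<forall>\<alpha>\<in>Field omega1. openin X (U \<alpha>)
            \<and> Lindelof_space (subtopology X (X closure_of (U \<alpha>)))
            \<and> U \<alpha> \<noteq> topspace X) \<and>
        (\<forall>\<alpha>\<in>Field omega1. \<forall>\<beta>\<in>Field omega1.
            (\<alpha>, \<beta>) \<in> omega1 \<and> \<alpha> \<noteq> \<beta> \<longrightarrow> X closure_of (U \<alpha>) \<subseteq> U \<beta>))"

definition lindelof_in :: "'a topology \<Rightarrow> 'a set \<Rightarrow> bool" where
  "lindelof_in X Z \<longleftrightarrow> Z \<subseteq> topspace X \<and> Lindelof_space (subtopology X Z)"

text \<open>The four properties, parametrised by the smallness notion Q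
  (Q = lindelof_in gives P, Q = compactin gives P_cpt).\<close>
definition EC_prop :: "('a topology \<Rightarrow> 'a set \<Rightarrow> bool) \<Rightarrow> 'a topology \<Rightarrow> 'b topology \<Rightarrow> bool" where
  "EC_prop Q X Y \<longleftrightarrow> (\<forall>f. continuous_map X Y f \<longrightarrow>
     (\<exists>Z. Z \<subseteq> topspace X \<and> Q X Z \<and> (\<exists>y. f ` (topspace X - Z) = {y})))"

definition S_prop :: "('a topology \<Rightarrow> 'a set \<Rightarrow> bool) \<Rightarrow> 'a topology \<Rightarrow> 'b topology \<Rightarrow> bool" where
  "S_prop Q X Y \<longleftrightarrow> (\<forall>f. continuous_map X Y f \<longrightarrow>
     (\<exists>Z r. Z \<subseteq> topspace X \<and> Q X Z \<and>
        continuous_map X (subtopology X Z) r \<and> (\<forall>x\<in>Z. r x = x) \<and>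
        (\<forall>x\<in>topspace X. f (r x) = f x)))"

definition L_prop :: "('a topology \<Rightarrow> 'a set \<Rightarrow> bool) \<Rightarrow> 'a topology \<Rightarrow> 'b topology \<Rightarrow> bool" where
  "L_prop Q X Y \<longleftrightarrow> (\<forall>f. continuous_map X Y f \<longrightarrow>
     (\<exists>Z. Z \<subseteq> topspace X \<and> Q X Z \<and> f ` Z = f ` topspace X))"

definition BR_prop :: "('a topology \<Rightarrow> 'a set \<Rightarrow> bool) \<Rightarrow> 'a topology \<Rightarrow> 'b topology \<Rightarrow> bool" where
  "BR_prop Q X Y \<longleftrightarrow> (\<forall>f. continuous_map X Y f \<longrightarrow>
     (\<exists>Z. Z \<subseteq> topspace X \<and> Q X Z \<and>
        (\<forall>W. Z \<subseteq> W \<and> W \<subseteq> topspace X \<and> Q X W \<longrightarrow>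
             f ` (topspace X - W) = f ` (topspace X - Z))))"

end

theory Submission
  imports Defs "HOL-Library.Countable_Set_Type"
begin

(* If X were not countably compact, an increasing countable open cover without finite
   subcover would produce a countably infinite closed discrete set D. Being countable, D is
   Lindeloef, so by the Type I structure it lies in an open U with Lindeloef closure. That
   closure is regular and Lindeloef, hence normal, so Tietze extends an unbounded function
   on D to all of X, contradicting pseudocompactness.
   In the countably compact space X closed Lindeloef sets are compact, so every Lindeloef set
   lies in a compact proper subset (the closure of a later U). Enlarging Lindeloef witnesses
   to these compact sets, and shrinking the other way, gives the four equivalences; for S one
   also uses that a retract of a Hausdorff space is closed. *)

lemma omega1_Card_order: "Card_order omega1"
  by (simp add: cardSuc_Card_order natLeq_Card_order)

lemma omega1_strict_successor:
  assumes "a \<in> Field omega1"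
  shows "\<exists>b\<in>Field omega1. a \<noteq> b \<and> (a, b) \<in> omega1"
proof (rule infinite_Card_order_limit[OF omega1_Card_order _ assms])
  show "\<not> finite (Field omega1)"
    using cardSuc_finite[OF natLeq_Card_order] by (simp add: Field_natLeq)
qed

lemma omega1_countable_upper_bound:
  assumes "countable A" "A \<subseteq> Field omega1"
  obtains i where "i \<in> Field omega1" "\<And>a. a \<in> A \<Longrightarrow> (a, i) \<in> omega1"
proof -
  have wo: "wo_rel omega1"
    using omega1_Card_order by (simp add: card_order_on_well_order_on wo_rel_def)
  have "relChain omega1 (under omega1)"
    unfolding relChain_def under_def using wo_rel.TRANS[OF wo] by (auto elim: transE)
  moreover have "A \<subseteq> (\<Union>i\<in>Field omega1. under omega1 i)"
    using assms(2) wo_rel.REFL[OF wo] unfolding under_def refl_on_def by blast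
  ultimately obtain i where "i \<in> Field omega1" "A \<subseteq> under omega1 i"
    using cardSuc_UNION[OF natLeq_Card_order, of "under omega1" A] assms(1)
    by (auto simp: Field_natLeq countable_card_le_natLeq)
  then show thesis
    using that unfolding under_def by auto
qed

lemma typeI_space_lindelof_in_subset_open:
  assumes "typeI_space X" "lindelof_in X Z"
  obtains U where "openin X U" "Lindelof_space (subtopology X (X closure_of U))"
    "Z \<subseteq> U" "X closure_of U \<noteq> topspace X"
proof -
  obtain V where cover: "topspace X = (\<Union>\<alpha>\<in>Field omega1. V \<alpha>)"
    and V: "\<forall>\<alpha>\<in>Field omega1. openin X (V \<alpha>)
              \<and> Lindelof_space (subtopology X (X closure_of V \<alpha>)) \<and> V \<alpha> \<noteq> topspace X"
    and closure_V: "\<forall>\<alpha>\<in>Field omega1. \<forall>\<beta>\<in>Field omega1.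
              (\<alpha>, \<beta>) \<in> omega1 \<and> \<alpha> \<noteq> \<beta> \<longrightarrow> X closure_of V \<alpha> \<subseteq> V \<beta>"
    using assms(1) unfolding typeI_space_def by (elim exE conjE) (rule that; assumption)
  have V_open: "openin X (V \<alpha>)" if "\<alpha> \<in> Field omega1" for \<alpha>
    using V that by simp
  have V_mono: "V \<alpha> \<subseteq> V \<beta>" if "\<alpha> \<in> Field omega1" "\<beta> \<in> Field omega1" "(\<alpha>, \<beta>) \<in> omega1" for \<alpha> \<beta>
  proof (cases "\<alpha> = \<beta>")
    case False
    have "V \<alpha> \<subseteq> X closure_of V \<alpha>"
      using V_open[OF that(1)] by (simp add: closure_of_subset openin_subset)
    also have "\<dots> \<subseteq> V \<beta>"
      using closure_V that False by simp
    finally show ?thesis .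
  qed simp
  have Z: "Z \<subseteq> topspace X" "Lindelof_space (subtopology X Z)"
    using assms(2) unfolding lindelof_in_def by auto
  obtain \<V> where "countable \<V>" "\<V> \<subseteq> V ` Field omega1" "Z \<subseteq> \<Union>\<V>"
    using Z(2)[unfolded Lindelof_space_subtopology_subset[OF Z(1)], rule_format, of "V ` Field omega1"]
      V_open cover Z(1) by auto
  then obtain A where A: "countable A" "A \<subseteq> Field omega1" "Z \<subseteq> (\<Union>a\<in>A. V a)"
    by (metis countable_subset_image)
  obtain i where i: "i \<in> Field omega1" "\<And>a. a \<in> A \<Longrightarrow> (a, i) \<in> omega1"
    using omega1_countable_upper_bound[OF A(1,2)] by blast
  have "Z \<subseteq> V i"
    using A(2,3) V_mono[OF _ i(1) i(2)] by blast
  obtain j where j: "j \<in> Field omega1" "i \<noteq> j" "(i, j) \<in> omega1"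
    using omega1_strict_successor[OF i(1)] by blast
  have "X closure_of V i \<subseteq> V j"
    using closure_V i(1) j by simp
  moreover have "V j \<subset> topspace X"
    using V j(1) openin_subset by auto
  ultimately have "X closure_of V i \<noteq> topspace X"
    by blast
  with V i(1) \<open>Z \<subseteq> V i\<close> show thesis
    using that[of "V i"] by simp
qed

lemma pasting_lemma_two_closed:
  assumes "closedin X A" "closedin X B" "topspace X \<subseteq> A \<union> B"
    and "continuous_map (subtopology X A) Y f" "continuous_map (subtopology X B) Y g"
    and "\<And>x. \<lbrakk>x \<in> topspace X; x \<in> A; x \<in> B\<rbrakk> \<Longrightarrow> f x = g x"
  shows "continuous_map X Y (\<lambda>x. if x \<in> A then f x else g x)"
  by (rule pasting_lemma_closed[where I = "{True, False}" and T = "\<lambda>b. if b then A else B"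
        and f = "\<lambda>b. if b then f else g"]) (use assms in auto)

lemma closedin_discrete_if_locally_finite:
  assumes "t1_space X" "D \<subseteq> topspace X"
    and "\<And>x. x \<in> topspace X \<Longrightarrow> \<exists>V. openin X V \<and> x \<in> V \<and> finite (V \<inter> D)"
  shows "closedin X D" "subtopology X D = discrete_topology D"
proof -
  have closed: "closedin X E" if "E \<subseteq> D" for E
  proof -
    have "locally_finite_in X ((\<lambda>x. {x}) ` E)"
      unfolding locally_finite_in_def
    proof (intro conjI ballI)
      show "\<Union> ((\<lambda>x. {x}) ` E) \<subseteq> topspace X"
        using that assms(2) by auto
      fix x assume "x \<in> topspace X"
      then obtain V where V: "openin X V" "x \<in> V" "finite (V \<inter> D)"
        using assms(3) by blast
      have "{S \<in> (\<lambda>x. {x}) ` E. S \<inter> V \<noteq> {}} = (\<lambda>x. {x}) ` (V \<inter> E)"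
        by auto
      moreover have "finite (V \<inter> E)"
        using V(3) that by (meson finite_subset inf_mono order_refl)
      ultimately show "\<exists>V. openin X V \<and> x \<in> V \<and> finite {S \<in> (\<lambda>x. {x}) ` E. S \<inter> V \<noteq> {}}"
        using V(1,2) by auto
    qed
    moreover have "closedin X {x}" if "x \<in> E" for x
      using assms(1,2) \<open>E \<subseteq> D\<close> that by (simp add: subset_iff t1_space_closedin_singleton)
    ultimately show ?thesis
      using closedin_locally_finite_Union[of "(\<lambda>x. {x}) ` E" X] by auto
  qed
  show "closedin X D"
    by (rule closed) simp
  show "subtopology X D = discrete_topology D"
  proof (subst eq_commute, subst discrete_topology_unique, intro conjI ballI)
    show "topspace (subtopology X D) = D"
      using assms(2) by auto
    fix d assume "d \<in> D"
    have "closedin (subtopology X D) (D - {d})"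
      using closed[of "D - {d}"] by (simp add: closedin_subset_topspace)
    then show "openin (subtopology X D) {d}"
      using \<open>d \<in> D\<close> assms(2) by (simp add: openin_closedin_eq Int_absorb1 subsetD)
  qed
qed

lemma not_countably_compact_imp_increasing_open_cover:
  assumes "\<not> countably_compact_space X"
  obtains W :: "nat \<Rightarrow> 'a set" where "mono W" "\<And>n. openin X (W n)"
    "topspace X \<subseteq> (\<Union>n. W n)" "\<And>n. \<not> topspace X \<subseteq> W n"
proof -
  obtain \<U> where \<U>: "countable \<U>" "\<forall>U\<in>\<U>. openin X U" "topspace X \<subseteq> \<Union>\<U>"
    and no_finite_subcover: "\<And>\<F>. \<lbrakk>\<F> \<subseteq> \<U>; finite \<F>\<rbrakk> \<Longrightarrow> \<not> topspace X \<subseteq> \<Union>\<F>"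
    using assms unfolding countably_compact_space_def by auto
  have "\<U> \<noteq> {}"
    using \<U>(3) no_finite_subcover[of "{}"] by auto
  then have range: "range (from_nat_into \<U>) = \<U>"
    by (simp add: range_from_nat_into \<U>(1))
  define W where "W n = \<Union> (from_nat_into \<U> ` {..n})" for n
  show thesis
  proof
    show "mono W"
      unfolding W_def mono_def by (intro allI impI Union_mono image_mono) auto
    show "openin X (W n)" for n
      unfolding W_def using range \<U>(2) by (intro openin_Union) auto
    show "topspace X \<subseteq> (\<Union>n. W n)"
    proof
      fix y assume "y \<in> topspace X"
      then have "y \<in> \<Union> (range (from_nat_into \<U>))"
        unfolding range using \<U>(3) by blast
      then obtain k where "y \<in> from_nat_into \<U> k"
        by blast
      then show "y \<in> (\<Union>n. W n)"
        unfolding W_def by (intro UN_I[of k]) auto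
    qed
    show "\<not> topspace X \<subseteq> W n" for n
      unfolding W_def by (rule no_finite_subcover) (use range in auto)
  qed
qed

lemma not_countably_compact_imp_closed_discrete:
  assumes "t1_space X" "\<not> countably_compact_space X"
  obtains D where "D \<subseteq> topspace X" "countable D" "infinite D" "closedin X D"
    "subtopology X D = discrete_topology D"
proof -
  obtain W :: "nat \<Rightarrow> 'a set" where W: "mono W" "\<And>n. openin X (W n)" "topspace X \<subseteq> (\<Union>n. W n)"
    "\<And>n. \<not> topspace X \<subseteq> W n"
    using not_countably_compact_imp_increasing_open_cover[OF assms(2)] by blast
  have "\<forall>n. \<exists>y. y \<in> topspace X \<and> y \<notin> W n"
    using W(4) by auto
  then have "\<exists>x. \<forall>n. x n \<in> topspace X \<and> x n \<notin> W n"
    by (rule choice)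
  then obtain x where x: "\<And>n. x n \<in> topspace X" "\<And>n. x n \<notin> W n"
    by blast
  have below: "m < n" if "x m \<in> W n" for m n
  proof (rule ccontr)
    assume "\<not> m < n"
    then have "W n \<subseteq> W m"
      by (intro monoD[OF W(1)]) simp
    then show False
      using that x(2) by blast
  qed
  define D where "D = range x"
  have "countable D"
    unfolding D_def by simp
  have "infinite D"
  proof
    assume "finite D"
    have fibre: "finite (x -` {y})" if "y \<in> D" for y
    proof -
      have "y \<in> topspace X"
        using x(1) that unfolding D_def by blast
      then obtain k where "y \<in> W k"
        using W(3) by blast
      then have "x -` {y} \<subseteq> {..<k}"
        using below by auto
      then show ?thesis
        using finite_lessThan finite_subset by blast
    qed
    have "finite (\<Union>y\<in>D. x -` {y})"
      using \<open>finite D\<close> fibre by (rule finite_UN_I)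
    moreover have "(\<Union>y\<in>D. x -` {y}) = UNIV"
      unfolding D_def by auto
    ultimately show False
      by simp
  qed
  have D_subset: "D \<subseteq> topspace X"
    unfolding D_def using x(1) by auto
  have locally_finite: "\<exists>V. openin X V \<and> y \<in> V \<and> finite (V \<inter> D)" if y: "y \<in> topspace X" for y
  proof -
    obtain k where "y \<in> W k"
      using W(3) y by blast
    have "W k \<inter> D \<subseteq> x ` {..<k}"
      unfolding D_def using below by auto
    then have "finite (W k \<inter> D)"
      by (rule finite_subset) simp
    with W(2) \<open>y \<in> W k\<close> show ?thesis
      by blast
  qed
  show thesis
    using that[OF D_subset \<open>countable D\<close> \<open>infinite D\<close>]
      closedin_discrete_if_locally_finite[OF assms(1) D_subset locally_finite] by blast
qed

lemma Tietze_extension_into_Lindelof_closedin: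
  assumes "regular_space X" "closedin X L" "Lindelof_space (subtopology X L)"
    and "closedin X C" "C \<subseteq> L" "continuous_map (subtopology X C) euclideanreal h"
  obtains G where "continuous_map (subtopology X L) euclideanreal G" "\<And>x. x \<in> C \<Longrightarrow> G x = h x"
proof -
  have normal: "normal_space (subtopology X L)"
    using regular_Lindelof_imp_normal_space[OF regular_space_subtopology[OF assms(1)] assms(3)] .
  have "continuous_map (subtopology (subtopology X L) C) euclideanreal h"
    using assms(5,6) by (simp add: subtopology_subtopology Int_absorb1)
  then show thesis
  proof (rule Tietze_extension_realinterval[OF normal closedin_subset_topspace[OF assms(4,5)]
        is_interval_univ UNIV_not_empty _ subset_UNIV])
    fix G assume G: "continuous_map (subtopology X L) euclideanreal G"
      "G ` topspace (subtopology X L) \<subseteq> UNIV" "\<And>x. x \<in> C \<Longrightarrow> G x = h x"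
    from G(1,3) show thesis
      by (rule that)
  qed
qed

lemma continuous_map_extension_within_Lindelof_closure:
  assumes "regular_space X" "openin X U" "Lindelof_space (subtopology X (X closure_of U))"
    and "closedin X A" "A \<subseteq> U" "continuous_map (subtopology X A) euclideanreal g"
  obtains G where "continuous_map X euclideanreal G" "\<And>x. x \<in> A \<Longrightarrow> G x = g x"
proof -
  define L where "L = X closure_of U"
  have "U \<subseteq> L"
    unfolding L_def using assms(2) by (simp add: closure_of_subset openin_subset)
  have "closedin X L"
    unfolding L_def by simp
  have "closedin X (L - U)"
    using \<open>closedin X L\<close> assms(2) by (simp add: closedin_diff)
  (* Prescribing 0 on L - U makes the extension to L glue with 0 outside U. *)
  define C where "C = A \<union> (L - U)"
  have "continuous_map (subtopology X C) euclideanreal (\<lambda>x. if x \<in> A then g x else 0)"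
  proof (rule pasting_lemma_two_closed)
    show "closedin (subtopology X C) A" "closedin (subtopology X C) (L - U)"
      using assms(4) \<open>closedin X (L - U)\<close> unfolding C_def by (auto intro: closedin_subset_topspace)
    show "continuous_map (subtopology (subtopology X C) A) euclideanreal g"
      using assms(6) unfolding C_def by (simp add: subtopology_subtopology Int_absorb1)
  qed (use assms(5) C_def in auto)
  moreover have "closedin X C" "C \<subseteq> L"
    unfolding C_def using assms(4,5) \<open>closedin X (L - U)\<close> \<open>U \<subseteq> L\<close> by blast+
  ultimately obtain G0 where G0: "continuous_map (subtopology X L) euclideanreal G0"
    "\<And>x. x \<in> C \<Longrightarrow> G0 x = (if x \<in> A then g x else 0)"
    using Tietze_extension_into_Lindelof_closedin[OF assms(1) \<open>closedin X L\<close> assms(3)[folded L_def]]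
    by blast
  have "continuous_map X euclideanreal (\<lambda>x. if x \<in> L then G0 x else 0)"
  proof (rule pasting_lemma_two_closed)
    show "closedin X (topspace X - U)"
      using assms(2) by blast
    show "G0 x = 0" if "x \<in> topspace X" "x \<in> L" "x \<in> topspace X - U" for x
      using G0(2)[of x] assms(5) that unfolding C_def by auto
  qed (use \<open>closedin X L\<close> G0(1) \<open>U \<subseteq> L\<close> in auto)
  moreover have "(if x \<in> L then G0 x else 0) = g x" if "x \<in> A" for x
    using G0(2)[of x] that assms(5) \<open>U \<subseteq> L\<close> unfolding C_def by auto
  ultimately show thesis
    using that by blast
qed

lemma pseudocompact_space_extendable_discrete_finite:
  assumes "pseudocompact_space X" "subtopology X D = discrete_topology D"
    and extend: "\<And>g. continuous_map (subtopology X D) euclideanreal g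
                  \<Longrightarrow> \<exists>G. continuous_map X euclideanreal G \<and> (\<forall>x\<in>D. G x = g x)"
  shows "finite D"
proof (rule ccontr)
  assume "infinite D"
  then obtain f :: "nat \<Rightarrow> 'a" where "inj f" "range f \<subseteq> D"
    using infinite_countable_subset by blast
  have "continuous_map (subtopology X D) euclideanreal (\<lambda>y. real (inv f y))"
    using assms(2) by simp
  then obtain G where G: "continuous_map X euclideanreal G" "\<And>x. x \<in> D \<Longrightarrow> G x = real (inv f x)"
    using extend by blast
  have "D \<subseteq> topspace X"
    using arg_cong[OF assms(2), of topspace] by auto
  have "bounded (G ` topspace X)"
    using assms(1) G(1) unfolding pseudocompact_space_def by blast
  then obtain B where B: "\<And>x. x \<in> topspace X \<Longrightarrow> \<bar>G x\<bar> \<le> B"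
    unfolding bounded_iff by auto
  obtain n :: nat where "B < real n"
    using reals_Archimedean2 by blast
  moreover have "G (f n) = real n"
    using G(2)[of "f n"] \<open>range f \<subseteq> D\<close> \<open>inj f\<close> by auto
  moreover have "\<bar>G (f n)\<bar> \<le> B"
    using B \<open>range f \<subseteq> D\<close> \<open>D \<subseteq> topspace X\<close> by blast
  ultimately show False
    by simp
qed

theorem typeI_pseudocompact_imp_countably_compact:
  assumes "t1_space X" "regular_space X" "typeI_space X" "pseudocompact_space X"
  shows "countably_compact_space X"
proof (rule ccontr)
  assume "\<not> countably_compact_space X"
  then obtain D where D: "D \<subseteq> topspace X" "countable D" "infinite D" "closedin X D"
    "subtopology X D = discrete_topology D"
    using not_countably_compact_imp_closed_discrete[OF assms(1)] by blast
  have "lindelof_in X D"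
    unfolding lindelof_in_def using D(1,2) by (simp add: countable_imp_Lindelof_space)
  then obtain U where U: "openin X U" "Lindelof_space (subtopology X (X closure_of U))" "D \<subseteq> U"
    by (rule typeI_space_lindelof_in_subset_open[OF assms(3)])
  have "finite D"
  proof (rule pseudocompact_space_extendable_discrete_finite[OF assms(4) D(5)])
    fix g assume "continuous_map (subtopology X D) euclideanreal g"
    then obtain G where "continuous_map X euclideanreal G" "\<And>x. x \<in> D \<Longrightarrow> G x = g x"
      using continuous_map_extension_within_Lindelof_closure[OF assms(2) U(1,2) D(4) U(3)] by blast
    then show "\<exists>G. continuous_map X euclideanreal G \<and> (\<forall>x\<in>D. G x = g x)"
      by blast
  qed
  with D(3) show False
    by simp
qed

lemma compactin_imp_lindelof_in: "compactin X Z \<Longrightarrow> lindelof_in X Z"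
  unfolding lindelof_in_def by (simp add: compactin_subspace compact_imp_Lindelof_space)

lemma countably_compact_space_closedin_Lindelof_imp_compactin:
  assumes "countably_compact_space X" "closedin X K" "Lindelof_space (subtopology X K)"
  shows "compactin X K"
  unfolding compactin_def
proof (intro conjI allI impI)
  show K: "K \<subseteq> topspace X"
    using assms(2) closedin_subset by blast
  fix \<U> assume \<U>: "(\<forall>U\<in>\<U>. openin X U) \<and> K \<subseteq> \<Union>\<U>"
  then obtain \<V> where \<V>: "countable \<V>" "\<V> \<subseteq> \<U>" "K \<subseteq> \<Union>\<V>"
    using assms(3)[unfolded Lindelof_space_subtopology_subset[OF K], rule_format, of \<U>] by auto
  define \<W> where "\<W> = insert (topspace X - K) \<V>"
  have "countable \<W> \<and> (\<forall>W\<in>\<W>. openin X W) \<and> topspace X \<subseteq> \<Union>\<W>"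
    unfolding \<W>_def using \<V> \<U> assms(2) by auto
  then obtain \<F> where \<F>: "\<F> \<subseteq> \<W>" "finite \<F>" "topspace X \<subseteq> \<Union>\<F>"
    using assms(1)[unfolded countably_compact_space_def, rule_format, of \<W>] by auto
  have "finite (\<F> - {topspace X - K}) \<and> \<F> - {topspace X - K} \<subseteq> \<U> \<and> K \<subseteq> \<Union>(\<F> - {topspace X - K})"
    using \<F> \<V>(2) K unfolding \<W>_def by auto
  then show "\<exists>\<F>. finite \<F> \<and> \<F> \<subseteq> \<U> \<and> K \<subseteq> \<Union>\<F>"
    by (rule exI)
qed

lemma typeI_space_lindelof_in_subset_compactin:
  assumes "typeI_space X" "countably_compact_space X" "lindelof_in X Z"
  obtains K where "compactin X K" "Z \<subseteq> K" "K \<noteq> topspace X"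
proof -
  obtain U where U: "openin X U" "Lindelof_space (subtopology X (X closure_of U))" "Z \<subseteq> U"
    "X closure_of U \<noteq> topspace X"
    by (rule typeI_space_lindelof_in_subset_open[OF assms(1,3)])
  have "compactin X (X closure_of U)"
    by (rule countably_compact_space_closedin_Lindelof_imp_compactin[OF assms(2) closedin_closure_of U(2)])
  moreover have "Z \<subseteq> X closure_of U"
    using U(3) closure_of_subset[OF openin_subset[OF U(1)]] by (rule order_trans)
  ultimately show thesis
    using U(4) by (rule that)
qed

lemma EC_prop_mono:
  assumes "\<And>Z. Q X Z \<Longrightarrow> Q' X Z" "EC_prop Q X Y"
  shows "EC_prop Q' X Y"
  unfolding EC_prop_def
proof (intro allI impI)
  fix f assume f: "continuous_map X Y f"
  obtain Z y where "Z \<subseteq> topspace X" "Q X Z" "f ` (topspace X - Z) = {y}"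
    using assms(2)[unfolded EC_prop_def, rule_format, OF f] by blast
  then show "\<exists>Z. Z \<subseteq> topspace X \<and> Q' X Z \<and> (\<exists>y. f ` (topspace X - Z) = {y})"
    using assms(1) by blast
qed

lemma S_prop_mono:
  assumes "\<And>Z. Q X Z \<Longrightarrow> Q' X Z" "S_prop Q X Y"
  shows "S_prop Q' X Y"
  unfolding S_prop_def
proof (intro allI impI)
  fix f assume f: "continuous_map X Y f"
  obtain Z r where "Z \<subseteq> topspace X" "Q X Z" "continuous_map X (subtopology X Z) r"
    "\<forall>x\<in>Z. r x = x" "\<forall>x\<in>topspace X. f (r x) = f x"
    using assms(2)[unfolded S_prop_def, rule_format, OF f] by blast
  then show "\<exists>Z r. Z \<subseteq> topspace X \<and> Q' X Z \<and> continuous_map X (subtopology X Z) r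
      \<and> (\<forall>x\<in>Z. r x = x) \<and> (\<forall>x\<in>topspace X. f (r x) = f x)"
    using assms(1) by blast
qed

lemma L_prop_mono:
  assumes "\<And>Z. Q X Z \<Longrightarrow> Q' X Z" "L_prop Q X Y"
  shows "L_prop Q' X Y"
  unfolding L_prop_def
proof (intro allI impI)
  fix f assume f: "continuous_map X Y f"
  obtain Z where "Z \<subseteq> topspace X" "Q X Z" "f ` Z = f ` topspace X"
    using assms(2)[unfolded L_prop_def, rule_format, OF f] by blast
  then show "\<exists>Z. Z \<subseteq> topspace X \<and> Q' X Z \<and> f ` Z = f ` topspace X"
    using assms(1) by blast
qed

lemma EC_prop_lindelof_in_iff_compactin:
  assumes "\<And>Z. lindelof_in X Z \<Longrightarrow> \<exists>K. compactin X K \<and> Z \<subseteq> K \<and> K \<noteq> topspace X"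
  shows "EC_prop lindelof_in X Y \<longleftrightarrow> EC_prop compactin X Y"
proof
  assume EC: "EC_prop lindelof_in X Y"
  show "EC_prop compactin X Y"
    unfolding EC_prop_def
  proof (intro allI impI)
    fix f assume f: "continuous_map X Y f"
    obtain Z y where Z: "lindelof_in X Z" "f ` (topspace X - Z) = {y}"
      using EC[unfolded EC_prop_def, rule_format, OF f] by blast
    obtain K where K: "compactin X K" "Z \<subseteq> K" "K \<noteq> topspace X"
      using assms[OF Z(1)] by blast
    have "K \<subseteq> topspace X"
      using K(1) by (rule compactin_subset_topspace)
    have "f ` (topspace X - K) \<subseteq> {y}"
      using Z(2) K(2) by blast
    moreover have "topspace X - K \<noteq> {}"
      using \<open>K \<subseteq> topspace X\<close> K(3) by blast
    ultimately have "f ` (topspace X - K) = {y}"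
      by (simp add: subset_singleton_iff)
    with K(1) \<open>K \<subseteq> topspace X\<close>
    show "\<exists>K. K \<subseteq> topspace X \<and> compactin X K \<and> (\<exists>y. f ` (topspace X - K) = {y})"
      by blast
  qed
next
  show "EC_prop compactin X Y \<Longrightarrow> EC_prop lindelof_in X Y"
    by (rule EC_prop_mono[OF compactin_imp_lindelof_in])
qed

lemma S_prop_lindelof_in_iff_compactin:
  assumes "Hausdorff_space X" "\<And>Z. lindelof_in X Z \<Longrightarrow> \<exists>K. compactin X K \<and> Z \<subseteq> K"
  shows "S_prop lindelof_in X Y \<longleftrightarrow> S_prop compactin X Y"
proof
  assume S: "S_prop lindelof_in X Y"
  show "S_prop compactin X Y"
    unfolding S_prop_def
  proof (intro allI impI)
    fix f assume f: "continuous_map X Y f"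
    obtain Z r where Z: "Z \<subseteq> topspace X" "lindelof_in X Z"
      and r: "continuous_map X (subtopology X Z) r" "\<forall>x\<in>Z. r x = x" "\<forall>x\<in>topspace X. f (r x) = f x"
      using S[unfolded S_prop_def, rule_format, OF f] by blast
    have "Z retract_of_space X"
      unfolding retract_of_space_def using Z(1) r(1,2) by blast
    then have "closedin X Z"
      by (rule retract_of_space_imp_closedin[OF assms(1)])
    obtain K where "compactin X K" "Z \<subseteq> K"
      using assms(2)[OF Z(2)] by blast
    then have "compactin X Z"
      using \<open>closedin X Z\<close> by (rule closed_compactin)
    with Z(1) r show "\<exists>Z r. Z \<subseteq> topspace X \<and> compactin X Z \<and> continuous_map X (subtopology X Z) r
        \<and> (\<forall>x\<in>Z. r x = x) \<and> (\<forall>x\<in>topspace X. f (r x) = f x)"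
      by blast
  qed
next
  show "S_prop compactin X Y \<Longrightarrow> S_prop lindelof_in X Y"
    by (rule S_prop_mono[OF compactin_imp_lindelof_in])
qed

lemma L_prop_lindelof_in_iff_compactin:
  assumes "\<And>Z. lindelof_in X Z \<Longrightarrow> \<exists>K. compactin X K \<and> Z \<subseteq> K"
  shows "L_prop lindelof_in X Y \<longleftrightarrow> L_prop compactin X Y"
proof
  assume L: "L_prop lindelof_in X Y"
  show "L_prop compactin X Y"
    unfolding L_prop_def
  proof (intro allI impI)
    fix f assume f: "continuous_map X Y f"
    obtain Z where Z: "lindelof_in X Z" "f ` Z = f ` topspace X"
      using L[unfolded L_prop_def, rule_format, OF f] by blast
    obtain K where K: "compactin X K" "Z \<subseteq> K"
      using assms[OF Z(1)] by blast
    have "K \<subseteq> topspace X"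
      using K(1) by (rule compactin_subset_topspace)
    then have "f ` K = f ` topspace X"
      using Z(2) K(2) image_mono by (metis subset_antisym)
    with K(1) \<open>K \<subseteq> topspace X\<close> show "\<exists>K. K \<subseteq> topspace X \<and> compactin X K \<and> f ` K = f ` topspace X"
      by blast
  qed
next
  show "L_prop compactin X Y \<Longrightarrow> L_prop lindelof_in X Y"
    by (rule L_prop_mono[OF compactin_imp_lindelof_in])
qed

lemma BR_prop_lindelof_in_imp_compactin:
  assumes enlarge: "\<And>Z. lindelof_in X Z \<Longrightarrow> \<exists>K. compactin X K \<and> Z \<subseteq> K"
    and BR: "BR_prop lindelof_in X Y"
  shows "BR_prop compactin X Y"
  unfolding BR_prop_def
proof (intro allI impI)
  fix f assume f: "continuous_map X Y f"
  obtain Z where Z: "lindelof_in X Z"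
    and stable: "\<forall>W. Z \<subseteq> W \<and> W \<subseteq> topspace X \<and> lindelof_in X W
                   \<longrightarrow> f ` (topspace X - W) = f ` (topspace X - Z)"
    using BR[unfolded BR_prop_def, rule_format, OF f] by (elim exE conjE) (rule that)
  obtain K where K: "compactin X K" "Z \<subseteq> K"
    using enlarge[OF Z] by blast
  have "K \<subseteq> topspace X"
    using K(1) by (rule compactin_subset_topspace)
  have K_stable: "f ` (topspace X - K) = f ` (topspace X - Z)"
    using stable[unfolded imp_conjL, rule_format,
        OF K(2) \<open>K \<subseteq> topspace X\<close> compactin_imp_lindelof_in[OF K(1)]] .
  have K_any: "f ` (topspace X - W) = f ` (topspace X - K)"
    if "K \<subseteq> W" "W \<subseteq> topspace X" "compactin X W" for W
  proof -
    have "Z \<subseteq> W"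
      using K(2) that(1) by (rule order_trans)
    then show ?thesis
      using stable[unfolded imp_conjL, rule_format, OF _ that(2) compactin_imp_lindelof_in[OF that(3)]]
        K_stable by simp
  qed
  show "\<exists>K. K \<subseteq> topspace X \<and> compactin X K \<and>
      (\<forall>W. K \<subseteq> W \<and> W \<subseteq> topspace X \<and> compactin X W
           \<longrightarrow> f ` (topspace X - W) = f ` (topspace X - K))"
    by (intro exI[of _ K] conjI K(1) \<open>K \<subseteq> topspace X\<close> allI impI K_any) simp_all
qed

lemma BR_prop_compactin_imp_lindelof_in:
  assumes enlarge: "\<And>Z. lindelof_in X Z \<Longrightarrow> \<exists>K. compactin X K \<and> Z \<subseteq> K"
    and BR: "BR_prop compactin X Y"
  shows "BR_prop lindelof_in X Y"
  unfolding BR_prop_def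
proof (intro allI impI)
  fix f assume f: "continuous_map X Y f"
  obtain Z where Z: "Z \<subseteq> topspace X" "compactin X Z"
    and stable: "\<forall>W. Z \<subseteq> W \<and> W \<subseteq> topspace X \<and> compactin X W
                   \<longrightarrow> f ` (topspace X - W) = f ` (topspace X - Z)"
    using BR[unfolded BR_prop_def, rule_format, OF f] by (elim exE conjE) (rule that)
  have Z_any: "f ` (topspace X - W) = f ` (topspace X - Z)"
    if W: "Z \<subseteq> W" "W \<subseteq> topspace X" "lindelof_in X W" for W
  proof -
    obtain K where K: "compactin X K" "W \<subseteq> K"
      using enlarge[OF W(3)] by blast
    have "Z \<subseteq> K"
      using W(1) K(2) by (rule order_trans)
    then have "f ` (topspace X - Z) = f ` (topspace X - K)"
      using stable[unfolded imp_conjL, rule_format, OF _ compactin_subset_topspace[OF K(1)] K(1)] by simp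
    also have "\<dots> \<subseteq> f ` (topspace X - W)"
      using K(2) by (intro image_mono) blast
    finally have "f ` (topspace X - Z) \<subseteq> f ` (topspace X - W)" .
    moreover have "f ` (topspace X - W) \<subseteq> f ` (topspace X - Z)"
      using W(1) by (intro image_mono) blast
    ultimately show ?thesis
      by (rule equalityI[rotated])
  qed
  show "\<exists>Z. Z \<subseteq> topspace X \<and> lindelof_in X Z \<and>
      (\<forall>W. Z \<subseteq> W \<and> W \<subseteq> topspace X \<and> lindelof_in X W
           \<longrightarrow> f ` (topspace X - W) = f ` (topspace X - Z))"
    by (intro exI[of _ Z] conjI Z(1) compactin_imp_lindelof_in[OF Z(2)] allI impI Z_any) simp_all
qed

lemma BR_prop_lindelof_in_iff_compactin:
  assumes "\<And>Z. lindelof_in X Z \<Longrightarrow> \<exists>K. compactin X K \<and> Z \<subseteq> K"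
  shows "BR_prop lindelof_in X Y \<longleftrightarrow> BR_prop compactin X Y"
  using BR_prop_lindelof_in_imp_compactin[OF assms] BR_prop_compactin_imp_lindelof_in[OF assms] by blast

theorem theorem9p4:
  fixes X :: "'a topology" and Y :: "'b topology"
  assumes "Hausdorff_space X" and "Hausdorff_space Y"
    and "regular_space X" and "typeI_space X" and "pseudocompact_space X"
  shows "countably_compact_space X
    \<and> (EC_prop lindelof_in X Y \<longleftrightarrow> EC_prop compactin X Y)
    \<and> (S_prop lindelof_in X Y \<longleftrightarrow> S_prop compactin X Y)
    \<and> (L_prop lindelof_in X Y \<longleftrightarrow> L_prop compactin X Y)
    \<and> (BR_prop lindelof_in X Y \<longleftrightarrow> BR_prop compactin X Y)"
proof -
  have countably_compact: "countably_compact_space X"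
    using typeI_pseudocompact_imp_countably_compact[OF Hausdorff_imp_t1_space[OF assms(1)] assms(3-5)] .
  have proper_enlargement: "\<exists>K. compactin X K \<and> Z \<subseteq> K \<and> K \<noteq> topspace X" if "lindelof_in X Z" for Z
    by (rule typeI_space_lindelof_in_subset_compactin[OF assms(4) countably_compact that]) blast
  have enlargement: "\<exists>K. compactin X K \<and> Z \<subseteq> K" if "lindelof_in X Z" for Z
    using proper_enlargement[OF that] by blast
  show ?thesis
    by (intro conjI countably_compact EC_prop_lindelof_in_iff_compactin[OF proper_enlargement]
        S_prop_lindelof_in_iff_compactin[OF assms(1) enlargement]
        L_prop_lindelof_in_iff_compactin[OF enlargement]
        BR_prop_lindelof_in_iff_compactin[OF enlargement])
qed

end
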